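(* There is a constant $c=c(d)>0$, depending only on $d$, with the following property. Let $C\subset\mathbb{R}^d$ be a convex body and let $\mathcal{H}_C$ denote the family of all homothets of $C$. Then: (i) for every finite set $S\subset\mathbb{R}^d$ and every $\epsilon>0$, there is a set $W\subset\mathbb{R}^d$ with $|W|\le c/\epsilon$ such that $W\cap C'\neq\emptyset$ for every $C'\in\mathcal{H}_C$ with $|C'\cap S|\ge \epsilon|S|$ (i.e. $(S,\mathcal{H}_C|_S)$ admits a weak $\epsilon$-net of size $O_d(1/\epsilon)$); (ii) for every $C$-nice measure $\mu$ and every $\epsilon>0$, there is a set $W\subset\mathbb{R}^d$ with $|W|\le c/\epsilon$ such that $W\cap C'\neq\emptyset$ for every $C'\in\mathcal{H}_C$ with $\mu(C')\ge\epsilon\,\mu(\mathbb{R}^d)$.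
   Context: A convex body is a convex compact set with nonempty interior. A homothet of $C$ is a set $\lambda C+x=\{\lambda c+x: c\in C\}$ with $x\in\mathbb{R}^d$ and $\lambda>0$. All measures are Borel measures on $\mathbb{R}^d$ that are finite on compact sets. A measure $\mu$ is non-$C$-degenerate if it vanishes on the boundary of every homothet of $C$, and $C$-nice if it is finite ($\mu(\mathbb{R}^d)<\infty$), non-$C$-degenerate, and there is a ball $K$ with $\mu(K)=\mu(\mathbb{R}^d)$. *)

theory Defs
  imports "HOL-Analysis.Analysis"
begin

definition convex_body :: "'a::euclidean_space set \<Rightarrow> bool" where
  "convex_body C \<longleftrightarrow> convex C \<and> compact C \<and> interior C \<noteq> {}"

definition homothets :: "'a::euclidean_space set \<Rightarrow> 'a set set" where
  "homothets C = {(\<lambda>c. lam *\<^sub>R c + x) ` C | lam x. lam > 0}"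

definition locally_finite_borel :: "'a::euclidean_space measure \<Rightarrow> bool" where
  "locally_finite_borel M \<longleftrightarrow> sets M = sets borel \<and>
     (\<forall>K. compact K \<longrightarrow> emeasure M K < \<infinity>)"

definition non_degenerate :: "'a::euclidean_space set \<Rightarrow> 'a measure \<Rightarrow> bool" where
  "non_degenerate C M \<longleftrightarrow> (\<forall>H \<in> homothets C. emeasure M (frontier H) = 0)"

definition nice_measure :: "'a::euclidean_space set \<Rightarrow> 'a measure \<Rightarrow> bool" where
  "nice_measure C M \<longleftrightarrow> locally_finite_borel M \<and> emeasure M (space M) < \<infinity> \<and>
     non_degenerate C M \<and> (\<exists>z r. emeasure M (cball z r) = emeasure M (space M))"

end

theory Submission
  imports Defs "Jordan_Normal_Form.Determinant"
begin

text \<open>Let \<open>u 0, \<dots>, u d\<close> be the vertices of a simplex of nearly maximal volume in \<open>C\<close>; then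
  every point of \<open>C\<close> has affine coordinates of absolute value at most 2 with respect to them.
  In these coordinates one finds, for every homothet \<open>\<lambda>C + x\<close>, a grid of at most
  \<open>grid_size d\<close> points, a number depending on \<open>d\<close> only, that meets every homothet of scale
  at least \<open>\<lambda>/2\<close> meeting \<open>\<lambda>C + x\<close>.

  The net is built greedily. As long as some homothet has mass at least \<open>\<epsilon>\<close> outside the part
  already removed, take such a heavy homothet of nearly minimal scale, add its grid to the net and
  remove it: heavy homothets meeting it are hit by the grid, and the others keep their mass.
  Each round removes mass \<open>\<epsilon>\<close>, so there are at most \<open>1/\<epsilon>\<close> rounds. If heavy homothets of
  arbitrarily small scale exist, compactness yields an atom of mass \<open>\<epsilon>\<close>, which is added
  to the net instead.\<close>

no_notation Finite_Cartesian_Product.vec_nth (infixl "$" 90)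
no_notation Matrix.scalar_prod (infix "\<bullet>" 70)

section \<open>Simplices of nearly maximal volume\<close>

text \<open>If \<open>b\<close> enumerates an orthonormal basis, \<open>\<bar>simplex_det d b u\<bar> / d!\<close> is the volume of the
  simplex with vertices \<open>u 0, \<dots>, u d\<close>.\<close>

definition hom_coords :: "nat \<Rightarrow> (nat \<Rightarrow> 'a::real_inner) \<Rightarrow> 'a \<Rightarrow> real Matrix.vec" where
  "hom_coords d b p = Matrix.vec (Suc d) (\<lambda>j. if j = 0 then 1 else p \<bullet> b (j - 1))"

definition simplex_det :: "nat \<Rightarrow> (nat \<Rightarrow> 'a::real_inner) \<Rightarrow> (nat \<Rightarrow> 'a) \<Rightarrow> real" where
  "simplex_det d b u = Determinant.det (mat\<^sub>r (Suc d) (Suc d) (\<lambda>i. hom_coords d b (u i)))"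

lemma hom_coords_carrier [simp]: "hom_coords d b p \<in> carrier_vec (Suc d)"
  by (simp add: hom_coords_def)

lemma hom_coords_affine_combination:
  assumes "(\<Sum>j\<le>d. \<beta> j) = 1"
  shows "hom_coords d b (\<Sum>j\<le>d. \<beta> j *\<^sub>R u j)
           = finsum_vec TYPE(real) (Suc d) (\<lambda>j. \<beta> j \<cdot>\<^sub>v hom_coords d b (u j)) {0..<Suc d}"
    (is "_ = ?sum")
proof (rule eq_vecI)
  have sum_carrier: "?sum \<in> carrier_vec (Suc d)"
    by (rule finsum_vec_closed) auto
  then show "dim_vec (hom_coords d b (\<Sum>j\<le>d. \<beta> j *\<^sub>R u j)) = dim_vec ?sum"
    by (simp add: hom_coords_def)
  fix k assume "k < dim_vec ?sum"
  then have k: "k < Suc d" using sum_carrier by simp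
  have "?sum $ k = (\<Sum>j\<in>{0..<Suc d}. (\<beta> j \<cdot>\<^sub>v hom_coords d b (u j)) $ k)"
    by (rule index_finsum_vec) (use k in auto)
  also have "\<dots> = (\<Sum>j\<le>d. \<beta> j * (if k = 0 then 1 else u j \<bullet> b (k - 1)))"
    using k by (intro sum.reindex_bij_witness[of _ id id]) (auto simp: hom_coords_def)
  also have "\<dots> = hom_coords d b (\<Sum>j\<le>d. \<beta> j *\<^sub>R u j) $ k"
    using k assms by (cases "k = 0") (simp_all add: hom_coords_def inner_sum_left)
  finally show "hom_coords d b (\<Sum>j\<le>d. \<beta> j *\<^sub>R u j) $ k = ?sum $ k" ..
qed

lemma simplex_det_fun_upd:
  fixes u :: "nat \<Rightarrow> 'a::real_inner"
  assumes i: "i \<le> d" and sum: "(\<Sum>j\<le>d. \<beta> j) = 1"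
  shows "simplex_det d b (u(i := \<Sum>j\<le>d. \<beta> j *\<^sub>R u j)) = \<beta> i * simplex_det d b u"
proof -
  let ?n = "Suc d"
  let ?row = "\<lambda>j. hom_coords d b (u j)"
  let ?M = "\<lambda>v. mat\<^sub>r ?n ?n (\<lambda>r. if r = i then v else ?row r)"
  have "simplex_det d b (u(i := \<Sum>j\<le>d. \<beta> j *\<^sub>R u j))
      = Determinant.det (?M (finsum_vec TYPE(real) ?n (\<lambda>j. \<beta> j \<cdot>\<^sub>v ?row j) {0..<?n}))"
    unfolding simplex_det_def hom_coords_affine_combination[OF sum, symmetric]
    by (intro arg_cong[where f = Determinant.det] arg_cong[where f = "mat\<^sub>r ?n ?n"]) auto
  also have "\<dots> = (\<Sum>j\<in>{0..<?n}. Determinant.det (?M (\<beta> j \<cdot>\<^sub>v ?row j)))"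
    by (rule det_linear_row_finsum) (use i in auto)
  also have "\<dots> = (\<Sum>j\<in>{0..<?n}. if j = i then \<beta> i * simplex_det d b u else 0)"
  proof (intro sum.cong refl)
    fix j assume j: "j \<in> {0..<?n}"
    have "?M (\<beta> j \<cdot>\<^sub>v ?row j) = multrow i (\<beta> j) (?M (?row j))"
      by (rule eq_matI) (auto simp: mat_multrow_def hom_coords_def)
    then have "Determinant.det (?M (\<beta> j \<cdot>\<^sub>v ?row j)) = \<beta> j * Determinant.det (?M (?row j))"
      using i by (simp add: det_multrow[of i "Suc d"])
    moreover have "?M (?row i) = mat\<^sub>r ?n ?n ?row"
      by (intro arg_cong[where f = "mat\<^sub>r ?n ?n"]) auto
    moreover have "Determinant.det (?M (?row j)) = 0" if "j \<noteq> i"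
      by (rule det_identical_rows[OF _ that[symmetric], of _ ?n]) (use i j that in auto)
    ultimately show "Determinant.det (?M (\<beta> j \<cdot>\<^sub>v ?row j)) = (if j = i then \<beta> i * simplex_det d b u else 0)"
      unfolding simplex_det_def by auto
  qed
  also have "\<dots> = \<beta> i * simplex_det d b u"
    using i by simp
  finally show ?thesis .
qed

lemma affine_coords_if_simplex_det_nonzero:
  fixes u :: "nat \<Rightarrow> 'a::euclidean_space"
  assumes b: "bij_betw b {..<d} Basis" and nz: "simplex_det d b u \<noteq> 0"
  obtains \<beta> where "(\<Sum>j\<le>d. \<beta> j) = 1" "p = (\<Sum>j\<le>d. \<beta> j *\<^sub>R u j)"
proof -
  let ?n = "Suc d"
  define M where "M = mat\<^sub>r ?n ?n (\<lambda>i. hom_coords d b (u i))"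
  have M: "M \<in> carrier_mat ?n ?n" and MT: "transpose_mat M \<in> carrier_mat ?n ?n"
    unfolding M_def by simp_all
  have "Determinant.det (transpose_mat M) \<noteq> 0"
    using nz det_transpose[OF M] unfolding simplex_det_def M_def by simp
  from det_non_zero_imp_unit[OF MT this]
  obtain B where B: "B \<in> carrier_mat ?n ?n" and MB: "transpose_mat M * B = 1\<^sub>m ?n"
    unfolding Units_def ring_mat_def by auto
  define \<beta>v where "\<beta>v = B *\<^sub>v hom_coords d b p"
  have "transpose_mat M *\<^sub>v \<beta>v = hom_coords d b p"
    unfolding \<beta>v_def using assoc_mult_mat_vec[OF MT B, symmetric] MB by simp
  then have coord: "(\<Sum>i\<le>d. \<beta>v $ i * (hom_coords d b (u i) $ k)) = hom_coords d b p $ k"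
    if "k < ?n" for k
    using that M B unfolding M_def \<beta>v_def
    by (auto simp: scalar_prod_def mult.commute atLeast0LessThan lessThan_Suc_atMost
        dest!: arg_cong[where f = "\<lambda>v. v $ k"])
  show thesis
  proof
    show "(\<Sum>j\<le>d. \<beta>v $ j) = 1"
      using coord[of 0] by (simp add: hom_coords_def)
    show "p = (\<Sum>j\<le>d. \<beta>v $ j *\<^sub>R u j)"
    proof (rule euclidean_eqI)
      fix e :: 'a assume "e \<in> Basis"
      then obtain k where k: "k < d" "e = b k"
        using b unfolding bij_betw_def by auto
      then show "p \<bullet> e = (\<Sum>j\<le>d. \<beta>v $ j *\<^sub>R u j) \<bullet> e"
        using coord[of "Suc k"] by (simp add: hom_coords_def inner_sum_left)
    qed
  qed
qed

lemma abs_simplex_det_le: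
  fixes u :: "nat \<Rightarrow> 'a::euclidean_space"
  assumes u: "\<And>i. i \<le> d \<Longrightarrow> norm (u i) \<le> R" and R: "R \<ge> 1"
    and b: "\<And>j. j < d \<Longrightarrow> b j \<in> Basis"
  shows "\<bar>simplex_det d b u\<bar> \<le> fact (Suc d) * R ^ Suc d"
proof -
  let ?n = "Suc d"
  let ?M = "mat\<^sub>r ?n ?n (\<lambda>i. hom_coords d b (u i))"
  have entry: "\<bar>?M $$ (i, j)\<bar> \<le> R" if "i < ?n" "j < ?n" for i j
  proof (cases "j = 0")
    case False
    then have "\<bar>u i \<bullet> b (j - 1)\<bar> \<le> norm (u i)"
      using b that by (intro Basis_le_norm) auto
    with u[of i] that False show ?thesis by (simp add: hom_coords_def)
  qed (use that R in \<open>simp add: hom_coords_def\<close>)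
  have "\<bar>simplex_det d b u\<bar> \<le> (\<Sum>p | p permutes {0..<?n}. \<bar>signof p * (\<Prod>i = 0..<?n. ?M $$ (i, p i))\<bar>)"
    unfolding simplex_det_def by (subst det_def'[of _ ?n]) (auto intro: sum_abs)
  also have "\<dots> \<le> (\<Sum>p | p permutes {0..<?n}. R ^ ?n)"
  proof (rule sum_mono)
    fix p assume "p \<in> {p. p permutes {0..<?n}}"
    then have "\<bar>?M $$ (i, p i)\<bar> \<le> R" if "i < ?n" for i
      using entry permutes_in_image[of p "{0..<?n}" i] that by auto
    then have "(\<Prod>i = 0..<?n. \<bar>?M $$ (i, p i)\<bar>) \<le> R ^ ?n"
      using prod_mono[of "{0..<?n}" "\<lambda>i. \<bar>?M $$ (i, p i)\<bar>" "\<lambda>_. R"] by simp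
    then show "\<bar>signof p * (\<Prod>i = 0..<?n. ?M $$ (i, p i))\<bar> \<le> R ^ ?n"
      by (simp add: abs_mult abs_prod sign_def)
  qed
  also have "\<dots> = fact ?n * R ^ ?n"
    using card_permutations[of "{0..<?n}" ?n] by (simp add: algebra_simps)
  finally show ?thesis .
qed

lemma simplex_det_corner_nonzero:
  fixes z :: "'a::euclidean_space"
  assumes b: "bij_betw b {..<d} Basis" and "s \<noteq> 0"
  shows "simplex_det d b (\<lambda>i. if i = 0 then z else z + s *\<^sub>R b (i - 1)) \<noteq> 0"
proof -
  let ?n = "Suc d"
  define u where "u i = (if i = 0 then z else z + s *\<^sub>R b (i - 1))" for i
  have b_ortho: "b j \<bullet> b m = (if j = m then 1 else 0)" if "j < d" "m < d" for j m
  proof -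
    have "b j \<in> Basis" "b m \<in> Basis" "b j = b m \<longleftrightarrow> j = m"
      using b that unfolding bij_betw_def inj_on_def by auto
    then show ?thesis by (simp add: inner_Basis)
  qed
  define M where "M = mat\<^sub>r ?n ?n (\<lambda>i. hom_coords d b (u i))"
  have M: "M \<in> carrier_mat ?n ?n" unfolding M_def by simp
  have "Determinant.det M \<noteq> 0"
  proof
    assume "Determinant.det M = 0"
    then obtain v where v: "v \<in> carrier_vec ?n" "v \<noteq> 0\<^sub>v ?n" "M *\<^sub>v v = 0\<^sub>v ?n"
      using det_0_iff_vec_prod_zero_field[OF M] by auto
    define L where "L i = v $ 0 + (\<Sum>m<d. (u i \<bullet> b m) * v $ Suc m)" for i
    have L0: "L i = 0" if "i \<le> d" for i
    proof -
      have "(M *\<^sub>v v) $ i = L i"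
        using that v(1) unfolding M_def L_def
        by (simp add: scalar_prod_def atLeast0LessThan sum.lessThan_Suc_shift hom_coords_def
            del: sum.lessThan_Suc)
      then show ?thesis using v(3) that by simp
    qed
    have L_Suc: "L (Suc j) = L 0 + s * v $ Suc j" if "j < d" for j
    proof -
      have "(\<Sum>m<d. (u (Suc j) \<bullet> b m) * v $ Suc m)
          = (\<Sum>m<d. (z \<bullet> b m) * v $ Suc m + (if m = j then s * v $ Suc m else 0))"
        by (intro sum.cong refl) (auto simp: u_def inner_add_left b_ortho that algebra_simps)
      then show ?thesis
        using that by (simp add: L_def u_def sum.distrib)
    qed
    have v_Suc: "v $ Suc j = 0" if "j < d" for j
      using L_Suc[OF that] L0[of 0] L0[of "Suc j"] that \<open>s \<noteq> 0\<close> by simp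
    then have "v $ 0 = 0"
      using L0[of 0] by (simp add: L_def)
    with v_Suc have "v = 0\<^sub>v ?n"
      using v(1) by (intro eq_vecI) (auto simp: less_Suc_eq_0_disj)
    with v(2) show False ..
  qed
  then show ?thesis
    unfolding simplex_det_def M_def u_def .
qed

lemma simplex_det_nonzero_in_ball:
  fixes C :: "'a::euclidean_space set"
  assumes b: "bij_betw b {..<d} Basis" and "r > 0" and ball: "ball z r \<subseteq> C"
  obtains u where "\<And>i. i \<le> d \<Longrightarrow> u i \<in> C" "simplex_det d b u \<noteq> 0"
proof
  let ?u = "\<lambda>i. if i = 0 then z else z + (r / 2) *\<^sub>R b (i - 1)"
  show "simplex_det d b ?u \<noteq> 0"
    using simplex_det_corner_nonzero[OF b] \<open>r > 0\<close> by simp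
  show "?u i \<in> C" if "i \<le> d" for i
  proof -
    have "dist z (?u i) < r"
    proof (cases "i = 0")
      case False
      then have "b (i - 1) \<in> Basis" using b that unfolding bij_betw_def by auto
      then show ?thesis using \<open>r > 0\<close> by (simp add: dist_norm)
    qed (use \<open>r > 0\<close> in simp)
    then show ?thesis using ball by auto
  qed
qed

definition coord_bounded_frame :: "nat \<Rightarrow> (nat \<Rightarrow> 'a::real_vector) \<Rightarrow> 'a set \<Rightarrow> bool" where
  "coord_bounded_frame d u C \<longleftrightarrow> (\<forall>i\<le>d. u i \<in> C) \<and>
     (\<forall>p\<in>C. \<exists>\<beta>. (\<Sum>j\<le>d. \<beta> j) = 1 \<and> p = (\<Sum>j\<le>d. \<beta> j *\<^sub>R u j) \<and> (\<forall>j\<le>d. \<bar>\<beta> j\<bar> \<le> 2))"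

text \<open>Replacing a vertex of the simplex by \<open>p \<in> C\<close> multiplies its volume by the corresponding
  affine coordinate of \<open>p\<close>.\<close>

lemma coord_bounded_frame_if_near_max_volume:
  fixes u :: "nat \<Rightarrow> 'a::euclidean_space"
  assumes b: "bij_betw b {..<d} Basis" and u: "\<And>i. i \<le> d \<Longrightarrow> u i \<in> C"
    and nz: "simplex_det d b u \<noteq> 0"
    and near_max: "\<And>v. (\<And>i. i \<le> d \<Longrightarrow> v i \<in> C) \<Longrightarrow> \<bar>simplex_det d b v\<bar> \<le> 2 * \<bar>simplex_det d b u\<bar>"
  shows "coord_bounded_frame d u C"
  unfolding coord_bounded_frame_def
proof (intro conjI ballI allI impI u)
  fix p assume "p \<in> C"
  obtain \<beta> where \<beta>: "(\<Sum>j\<le>d. \<beta> j) = 1" "p = (\<Sum>j\<le>d. \<beta> j *\<^sub>R u j)"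
    using affine_coords_if_simplex_det_nonzero[OF b nz] by blast
  have "\<bar>\<beta> i\<bar> \<le> 2" if i: "i \<le> d" for i
  proof -
    have "simplex_det d b (u(i := p)) = \<beta> i * simplex_det d b u"
      using simplex_det_fun_upd[OF i \<beta>(1)] \<beta>(2) by simp
    moreover have "\<bar>simplex_det d b (u(i := p))\<bar> \<le> 2 * \<bar>simplex_det d b u\<bar>"
      using u \<open>p \<in> C\<close> by (intro near_max) auto
    ultimately show ?thesis
      using nz by (simp add: abs_mult)
  qed
  with \<beta> show "\<exists>\<beta>. (\<Sum>j\<le>d. \<beta> j) = 1 \<and> p = (\<Sum>j\<le>d. \<beta> j *\<^sub>R u j) \<and> (\<forall>j\<le>d. \<bar>\<beta> j\<bar> \<le> 2)"
    by blast
qed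

lemma coord_bounded_frame_exists:
  fixes C :: "'a::euclidean_space set"
  assumes "bounded C" and "interior C \<noteq> {}"
  obtains u where "coord_bounded_frame DIM('a) u C"
proof -
  define d where "d = DIM('a)"
  obtain b where b: "bij_betw b {..<d} (Basis :: 'a set)"
    using ex_bij_betw_nat_finite[OF finite_Basis] unfolding d_def atLeast0LessThan by blast
  from assms(2) obtain z r where r: "r > 0" "ball z r \<subseteq> C"
    using mem_interior by blast
  from assms(1) obtain R0 where "\<forall>x\<in>C. norm x \<le> R0"
    unfolding bounded_iff by blast
  then have R: "norm x \<le> max R0 1" if "x \<in> C" for x
    using that by fastforce
  define U where "U = {u. \<forall>i\<le>d. u i \<in> C}"
  define V where "V = (\<lambda>u. \<bar>simplex_det d b u\<bar>) ` U"
  have "\<bar>simplex_det d b u\<bar> \<le> fact (Suc d) * max R0 1 ^ Suc d" if "u \<in> U" for u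
    using that b by (intro abs_simplex_det_le R) (auto simp: U_def bij_betw_def)
  then have bdd: "bdd_above V"
    unfolding V_def by (intro bdd_aboveI) blast
  obtain u0 where "u0 \<in> U" "simplex_det d b u0 \<noteq> 0"
    using simplex_det_nonzero_in_ball[OF b r] unfolding U_def by blast
  then have "Sup V > 0"
    using cSup_upper[OF _ bdd, of "\<bar>simplex_det d b u0\<bar>"] unfolding V_def by fastforce
  then have "Sup V / 2 < Sup V" by simp
  then obtain u where u: "u \<in> U" and big: "Sup V < 2 * \<bar>simplex_det d b u\<bar>"
    using less_cSup_iff[OF _ bdd, of "Sup V / 2"] \<open>u0 \<in> U\<close> unfolding V_def by fastforce
  have "\<bar>simplex_det d b v\<bar> \<le> Sup V" if "\<And>i. i \<le> d \<Longrightarrow> v i \<in> C" for v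
    using that unfolding V_def U_def by (intro cSup_upper bdd[unfolded V_def U_def]) auto
  then have "coord_bounded_frame d u C"
    using \<open>Sup V > 0\<close> big u b unfolding U_def
    by (intro coord_bounded_frame_if_near_max_volume) fastforce+
  then show thesis
    unfolding d_def by (rule that)
qed

section \<open>Homothets and grids\<close>

definition homothet :: "'a::real_vector set \<Rightarrow> real \<Rightarrow> 'a \<Rightarrow> 'a set" where
  "homothet C lam x = (\<lambda>c. lam *\<^sub>R c + x) ` C"

lemma homothets_eq: "homothets C = {homothet C lam x | lam x. lam > 0}"
  unfolding homothets_def homothet_def ..

lemma compact_homothet:
  fixes C :: "'a::real_normed_vector set"
  shows "compact C \<Longrightarrow> compact (homothet C lam x)"
  unfolding homothet_def by (rule compact_continuous_image) (auto intro!: continuous_intros)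

lemma homothet_subset_cball:
  assumes "\<And>c. c \<in> C \<Longrightarrow> norm c \<le> R" and "c0 \<in> C" and "lam \<ge> 0"
  shows "homothet C lam x \<subseteq> cball (lam *\<^sub>R c0 + x) (2 * lam * R)"
proof
  fix p assume "p \<in> homothet C lam x"
  then obtain c where c: "c \<in> C" "p = lam *\<^sub>R c + x"
    unfolding homothet_def by blast
  have "dist (lam *\<^sub>R c0 + x) p = lam * norm (c0 - c)"
    using c assms(3) by (simp add: dist_norm flip: scaleR_diff_right)
  also have "\<dots> \<le> lam * (2 * R)"
    using norm_triangle_ineq4[of c0 c] assms(1)[OF c(1)] assms(1)[OF assms(2)] assms(3)
    by (intro mult_left_mono) auto
  finally show "p \<in> cball (lam *\<^sub>R c0 + x) (2 * lam * R)"
    by simp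
qed

lemma homothet_shrink:
  assumes "convex C" and "c1 \<in> C" and "0 < nu" "nu \<le> lam"
  shows "homothet C nu (lam *\<^sub>R c1 + y - nu *\<^sub>R c1) \<subseteq> homothet C lam y"
proof
  fix p assume "p \<in> homothet C nu (lam *\<^sub>R c1 + y - nu *\<^sub>R c1)"
  then obtain c where c: "c \<in> C" "p = nu *\<^sub>R c + (lam *\<^sub>R c1 + y - nu *\<^sub>R c1)"
    unfolding homothet_def by blast
  define s where "s = nu / lam"
  have s: "0 \<le> s" "s \<le> 1" "lam * s = nu"
    using assms(3,4) by (auto simp: s_def)
  have "(1 - s) *\<^sub>R c1 + s *\<^sub>R c \<in> C"
    using assms(1,2) c(1) s(1,2) by (simp add: convex_alt)
  moreover have "p = lam *\<^sub>R c1 + y + (lam * s) *\<^sub>R (c - c1)"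
    using c(2) s(3) by (simp add: algebra_simps)
  then have "p = lam *\<^sub>R ((1 - s) *\<^sub>R c1 + s *\<^sub>R c) + y"
    by (simp add: algebra_simps)
  ultimately show "p \<in> homothet C lam y"
    unfolding homothet_def by blast
qed

definition grid_radius :: "nat \<Rightarrow> int" where
  "grid_radius d = int (2 * (d + 1)) + int d * (3 * int (2 * (d + 1)) + 1)"

definition frame_grid :: "nat \<Rightarrow> (nat \<Rightarrow> 'a::real_vector) \<Rightarrow> 'a \<Rightarrow> real \<Rightarrow> 'a set" where
  "frame_grid d u x lam =
     (\<lambda>k. x + lam *\<^sub>R (\<Sum>i\<le>d. (of_int (k i) / real (2 * (d + 1))) *\<^sub>R u i))
       ` PiE {..d} (\<lambda>_. {-grid_radius d..grid_radius d})"

definition grid_size :: "nat \<Rightarrow> nat" where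
  "grid_size d = nat (2 * grid_radius d + 1) ^ Suc d"

lemma grid_radius_nonneg: "grid_radius d \<ge> 0"
  by (simp add: grid_radius_def)

lemma grid_size_pos: "grid_size d > 0"
  using grid_radius_nonneg[of d] by (simp add: grid_size_def)

lemma finite_frame_grid: "finite (frame_grid d u x lam)"
  unfolding frame_grid_def by (intro finite_imageI finite_PiE) auto

lemma card_frame_grid_le: "card (frame_grid d u x lam) \<le> grid_size d"
proof -
  have "card (frame_grid d u x lam) \<le> card (PiE {..d} (\<lambda>_. {-grid_radius d..grid_radius d}))"
    unfolding frame_grid_def by (intro card_image_le finite_PiE) auto
  also have "\<dots> = grid_size d"
    by (simp add: card_PiE grid_size_def)
  finally show ?thesis .
qed

text \<open>Rounding up all coordinates but the \<open>0\<close>-th loses at most \<open>d < n / 2\<close>,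
  which the slack \<open>n / 2\<close> in \<open>\<Sum>j. n * \<gamma> j = n / 2\<close> absorbs.\<close>

lemma lattice_point_above:
  fixes \<gamma> :: "nat \<Rightarrow> real" and d :: nat
  defines "n \<equiv> 2 * (d + 1)"
  assumes sum: "(\<Sum>j\<le>d. \<gamma> j) = 1 / 2" and bound: "\<And>j. j \<le> d \<Longrightarrow> \<bar>\<gamma> j\<bar> \<le> 3"
  obtains k where "k \<in> PiE {..d} (\<lambda>_. {-grid_radius d..grid_radius d})"
    "(\<Sum>i\<le>d. k i) = int n" "\<And>i. i \<le> d \<Longrightarrow> real n * \<gamma> i \<le> k i"
proof
  define k where "k i = (if i = 0 then int n - (\<Sum>j\<in>{1..d}. \<lceil>real n * \<gamma> j\<rceil>)
                         else if i \<le> d then \<lceil>real n * \<gamma> i\<rceil> else undefined)" for i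
  have split: "{..d} = insert 0 {1..d}" by auto
  show "(\<Sum>i\<le>d. k i) = int n"
    unfolding split by (simp add: k_def)
  have ceil_bound: "\<bar>\<lceil>real n * \<gamma> j\<rceil>\<bar> \<le> 3 * int n + 1" if "j \<le> d" for j
  proof -
    have "\<bar>real n * \<gamma> j\<bar> \<le> real n * 3"
      using bound[OF that] by (simp add: abs_mult mult_left_mono)
    then show ?thesis by linarith
  qed
  have sum_bound: "\<bar>\<Sum>j\<in>{1..d}. \<lceil>real n * \<gamma> j\<rceil>\<bar> \<le> (\<Sum>j\<in>{1..d}. 3 * int n + 1)"
    using ceil_bound by (intro order.trans[OF sum_abs] sum_mono) auto
  have radius: "grid_radius d = int n + int d * (3 * int n + 1)"
    by (simp add: grid_radius_def n_def)
  have "\<bar>k i\<bar> \<le> grid_radius d" if "i \<le> d" for i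
  proof (cases "i = 0")
    case False
    then have "3 * int n + 1 \<le> int d * (3 * int n + 1)"
      using that mult_right_mono[of 1 "int d" "3 * int n + 1"] by simp
    moreover have "k i = \<lceil>real n * \<gamma> i\<rceil>"
      using False that by (simp add: k_def)
    ultimately show ?thesis
      using ceil_bound[OF that] radius by linarith
  qed (use sum_bound in \<open>simp add: k_def radius\<close>)
  then have "k i \<in> {-grid_radius d..grid_radius d}" if "i \<le> d" for i
    using that by (fastforce simp: abs_le_iff)
  moreover have "k i = undefined" if "\<not> i \<le> d" for i
    using that by (simp add: k_def)
  ultimately show "k \<in> PiE {..d} (\<lambda>_. {-grid_radius d..grid_radius d})"
    by (auto simp: PiE_def extensional_def)
  show "real n * \<gamma> i \<le> k i" if "i \<le> d" for i
  proof (cases "i = 0")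
    case True
    have "(\<Sum>j\<in>{1..d}. real_of_int \<lceil>real n * \<gamma> j\<rceil>) \<le> (\<Sum>j\<in>{1..d}. real n * \<gamma> j + 1)"
      by (intro sum_mono) linarith
    also have "\<dots> = real n * (1 / 2 - \<gamma> 0) + real d"
    proof -
      have "(\<Sum>j\<in>{1..d}. \<gamma> j) = 1 / 2 - \<gamma> 0"
        using sum unfolding split by simp
      then show ?thesis
        by (simp add: sum.distrib flip: sum_distrib_left)
    qed
    finally show ?thesis
      using True by (simp add: k_def n_def algebra_simps)
  qed (use that in \<open>simp add: k_def\<close>)
qed

lemma frame_grid_point:
  fixes u :: "nat \<Rightarrow> 'a::real_vector"
  assumes "convex C" and frame: "coord_bounded_frame d u C" and "c1 \<in> C" "c2 \<in> C"
  obtains c where "c \<in> C" "x + lam *\<^sub>R (c2 + (1 / 2) *\<^sub>R (c - c1)) \<in> frame_grid d u x lam"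
proof -
  define n where "n = 2 * (d + 1)"
  from frame \<open>c1 \<in> C\<close> \<open>c2 \<in> C\<close> obtain \<beta>1 \<beta>2 where
    \<beta>1: "(\<Sum>j\<le>d. \<beta>1 j) = 1" "c1 = (\<Sum>j\<le>d. \<beta>1 j *\<^sub>R u j)" "\<forall>j\<le>d. \<bar>\<beta>1 j\<bar> \<le> 2" and
    \<beta>2: "(\<Sum>j\<le>d. \<beta>2 j) = 1" "c2 = (\<Sum>j\<le>d. \<beta>2 j *\<^sub>R u j)" "\<forall>j\<le>d. \<bar>\<beta>2 j\<bar> \<le> 2"
    unfolding coord_bounded_frame_def by meson
  define \<gamma> where "\<gamma> j = \<beta>2 j - \<beta>1 j / 2" for j
  have "(\<Sum>j\<le>d. \<gamma> j) = 1 / 2"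
    unfolding \<gamma>_def sum_subtractf sum_divide_distrib[symmetric] \<beta>1 \<beta>2 by simp
  moreover have "\<bar>\<gamma> j\<bar> \<le> 3" if "j \<le> d" for j
    using \<beta>1(3) \<beta>2(3) that unfolding \<gamma>_def by fastforce
  ultimately obtain k where k: "k \<in> PiE {..d} (\<lambda>_. {-grid_radius d..grid_radius d})"
    "(\<Sum>i\<le>d. k i) = int n" "\<And>i. i \<le> d \<Longrightarrow> real n * \<gamma> i \<le> k i"
    using lattice_point_above[of \<gamma> d] unfolding n_def by blast
  define \<alpha> where "\<alpha> i = 2 * (k i / n - \<gamma> i)" for i
  define c where "c = (\<Sum>i\<le>d. \<alpha> i *\<^sub>R u i)"
  have "(\<Sum>i\<le>d. real_of_int (k i)) = real n"
    using arg_cong[OF k(2), of real_of_int] by simp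
  moreover have "(\<Sum>i\<le>d. \<alpha> i) = 2 * ((\<Sum>i\<le>d. real_of_int (k i)) / real n) - 2 * (\<Sum>i\<le>d. \<gamma> i)"
    by (simp add: \<alpha>_def sum_subtractf sum_divide_distrib sum_distrib_left)
  ultimately have "(\<Sum>i\<le>d. \<alpha> i) = 1"
    using \<open>(\<Sum>j\<le>d. \<gamma> j) = 1 / 2\<close> by (simp add: n_def)
  moreover have "\<alpha> i \<ge> 0" if "i \<le> d" for i
    using k(3)[OF that] by (simp add: \<alpha>_def n_def field_simps)
  ultimately have "c \<in> C"
    unfolding c_def using \<open>convex C\<close> frame
    by (intro convex_sum) (auto simp: coord_bounded_frame_def)
  have "c2 + (1 / 2) *\<^sub>R (c - c1) = (\<Sum>i\<le>d. (\<beta>2 i + \<alpha> i / 2 - \<beta>1 i / 2) *\<^sub>R u i)"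
    unfolding c_def \<beta>1(2) \<beta>2(2)
    by (simp add: algebra_simps sum.distrib sum_subtractf scaleR_sum_right)
  also have "\<dots> = (\<Sum>i\<le>d. (of_int (k i) / real n) *\<^sub>R u i)"
    by (intro sum.cong refl) (simp add: \<alpha>_def \<gamma>_def n_def field_simps)
  finally have "x + lam *\<^sub>R (c2 + (1 / 2) *\<^sub>R (c - c1)) \<in> frame_grid d u x lam"
    using k(1) unfolding frame_grid_def n_def by (simp add: image_iff) blast
  with \<open>c \<in> C\<close> show thesis ..
qed

lemma frame_grid_meets_homothet:
  fixes C :: "'a::real_vector set"
  assumes "convex C" and frame: "coord_bounded_frame d u C"
    and "lam > 0" "lam / 2 \<le> mu" and meet: "homothet C mu y \<inter> homothet C lam x \<noteq> {}"
  shows "frame_grid d u x lam \<inter> homothet C mu y \<noteq> {}"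
proof -
  from meet obtain c1 c2 where "c1 \<in> C" "c2 \<in> C" and q: "mu *\<^sub>R c1 + y = lam *\<^sub>R c2 + x"
    unfolding homothet_def by auto
  obtain c where "c \<in> C" and grid: "x + lam *\<^sub>R (c2 + (1 / 2) *\<^sub>R (c - c1)) \<in> frame_grid d u x lam"
    using frame_grid_point[OF \<open>convex C\<close> frame \<open>c1 \<in> C\<close> \<open>c2 \<in> C\<close>] .
  have "x + lam *\<^sub>R (c2 + (1 / 2) *\<^sub>R (c - c1))
      = (lam / 2) *\<^sub>R c + (mu *\<^sub>R c1 + y - (lam / 2) *\<^sub>R c1)"
    unfolding q by (simp add: algebra_simps)
  also have "\<dots> \<in> homothet C (lam / 2) (mu *\<^sub>R c1 + y - (lam / 2) *\<^sub>R c1)"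
    using \<open>c \<in> C\<close> unfolding homothet_def by blast
  also have "\<dots> \<subseteq> homothet C mu y"
    using assms(3,4) by (intro homothet_shrink \<open>convex C\<close> \<open>c1 \<in> C\<close>) auto
  finally show ?thesis
    using grid by blast
qed

section \<open>Greedy construction of the net\<close>

locale finite_measure_bounded_support = finite_measure M for M :: "'a::euclidean_space measure" +
  fixes z :: 'a and r :: real
  assumes borel_subset_sets: "sets borel \<subseteq> sets M"
    and null_outside_cball: "measure M (- cball z r) = 0"
begin

lemma space_eq_UNIV: "space M = UNIV"
proof -
  have "UNIV \<in> sets M"
    using borel_subset_sets sets.top[of borel] by auto
  then show ?thesis
    using sets.sets_into_space by auto
qed

lemma closed_in_sets: "closed K \<Longrightarrow> K \<in> sets M"
  using borel_subset_sets borel_closed by blast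

lemma open_in_sets: "open U \<Longrightarrow> U \<in> sets M"
  using borel_subset_sets borel_open by blast

lemma compl_in_sets: "A \<in> sets M \<Longrightarrow> - A \<in> sets M"
  using sets.compl_sets[of A M] space_eq_UNIV by (metis Compl_eq_Diff_UNIV)

lemma measure_compl_Un:
  assumes "A \<in> sets M" "X \<in> sets M"
  shows "measure M (- (A \<union> X)) = measure M (- A) - measure M (X - A)"
proof -
  have "measure M (- (A \<union> X) \<union> (X - A)) = measure M (- (A \<union> X)) + measure M (X - A)"
    using assms by (intro finite_measure_Union) (auto intro: compl_in_sets)
  moreover have "- (A \<union> X) \<union> (X - A) = - A"
    by blast
  ultimately show ?thesis
    by simp
qed

lemma measure_shrinking_balls_tendsto:
  assumes "B \<in> sets M"
  shows "(\<lambda>n. measure M (ball p (1 / Suc n) \<inter> B)) \<longlonglongrightarrow> measure M ({p} \<inter> B)"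
proof -
  have "decseq (\<lambda>n. ball p (1 / Suc n) \<inter> B)"
    by (intro decseq_SucI Int_mono subset_ball order.refl) (simp add: frac_le)
  then have "(\<lambda>n. measure M (ball p (1 / Suc n) \<inter> B)) \<longlonglongrightarrow> measure M (\<Inter>n. ball p (1 / Suc n) \<inter> B)"
    using assms by (intro finite_Lim_measure_decseq) (auto intro: open_in_sets)
  moreover have "(\<Inter>n. ball p (1 / Suc n) \<inter> B) = {p} \<inter> B"
  proof (intro antisym subsetI)
    fix x assume x: "x \<in> (\<Inter>n. ball p (1 / Suc n) \<inter> B)"
    have "x = p"
    proof (rule ccontr)
      assume "x \<noteq> p"
      then obtain n where "1 / Suc n < dist p x"
        using reals_Archimedean[of "dist p x"] by (auto simp: inverse_eq_divide)
      moreover have "dist p x < 1 / Suc n"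
        using x by auto
      ultimately show False by simp
    qed
    with x show "x \<in> {p} \<inter> B" by auto
  qed auto
  ultimately show ?thesis by simp
qed

text \<open>A Lebesgue number argument on the compact support.\<close>

lemma atom_if_heavy_small_balls:
  assumes B: "B \<in> sets M" and "t > 0"
    and heavy: "\<And>\<eta>. \<eta> > 0 \<Longrightarrow> \<exists>q. measure M (cball q \<eta> \<inter> B) \<ge> t"
  shows "\<exists>p\<in>B. measure M {p} \<ge> t"
proof (rule ccontr)
  assume "\<not> ?thesis"
  then have light: "measure M ({p} \<inter> B) < t" for p
    using \<open>t > 0\<close> by (cases "p \<in> B") auto
  define \<G> where "\<G> = {U. open U \<and> measure M (U \<inter> B) < t}"
  have "\<exists>U\<in>\<G>. p \<in> U" for p
  proof -
    obtain n where "measure M (ball p (1 / Suc n) \<inter> B) < t"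
      using order_tendstoD(2)[OF measure_shrinking_balls_tendsto[OF B] light]
      by (auto simp: eventually_sequentially)
    then show ?thesis
      unfolding \<G>_def by (intro bexI[of _ "ball p (1 / Suc n)"]) auto
  qed
  then have "cball z r \<subseteq> \<Union>\<G>"
    by blast
  then obtain e where "e > 0" and lebesgue: "\<And>x. x \<in> cball z r \<Longrightarrow> \<exists>U\<in>\<G>. ball x e \<subseteq> U"
    using Heine_Borel_lemma[OF compact_cball, of z r \<G>] unfolding \<G>_def by blast
  obtain q where q: "measure M (cball q (e / 3) \<inter> B) \<ge> t"
    using heavy[of "e / 3"] \<open>e > 0\<close> by auto
  show False
  proof (cases "cball q (e / 3) \<inter> cball z r = {}")
    case True
    then have "measure M (cball q (e / 3) \<inter> B) \<le> measure M (- cball z r)"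
      by (intro finite_measure_mono compl_in_sets closed_in_sets) auto
    with q \<open>t > 0\<close> null_outside_cball show False by simp
  next
    case False
    then obtain x where x: "x \<in> cball q (e / 3)" "x \<in> cball z r" by blast
    then obtain U where U: "open U" "measure M (U \<inter> B) < t" "ball x e \<subseteq> U"
      using lebesgue unfolding \<G>_def by blast
    have "cball q (e / 3) \<subseteq> ball x e"
    proof
      fix y assume "y \<in> cball q (e / 3)"
      then show "y \<in> ball x e"
        using x(1) dist_triangle[of x y q] \<open>e > 0\<close> by (simp add: dist_commute)
    qed
    then have "measure M (cball q (e / 3) \<inter> B) \<le> measure M (U \<inter> B)"
      using U B by (intro finite_measure_mono) (auto intro: open_in_sets)
    with q U show False by simp
  qed
qed

lemma atom_if_heavy_small_homothets:
  assumes "compact C" "C \<noteq> {}" and A: "A \<in> sets M" and "t > 0"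
    and small: "\<And>\<eta>. \<eta> > 0 \<Longrightarrow> \<exists>mu y. 0 < mu \<and> mu < \<eta> \<and> measure M (homothet C mu y - A) \<ge> t"
  shows "\<exists>p. p \<notin> A \<and> measure M {p} \<ge> t"
proof -
  obtain R where R: "R > 0" "\<And>c. c \<in> C \<Longrightarrow> norm c \<le> R"
    using compact_imp_bounded[OF \<open>compact C\<close>] by (auto simp: bounded_pos)
  obtain c0 where "c0 \<in> C" using \<open>C \<noteq> {}\<close> by blast
  have "\<exists>q. measure M (cball q \<eta> \<inter> - A) \<ge> t" if "\<eta> > 0" for \<eta>
  proof -
    obtain mu y where mu: "0 < mu" "mu < \<eta> / (2 * R)" and heavy: "measure M (homothet C mu y - A) \<ge> t"
      using small[of "\<eta> / (2 * R)"] \<open>\<eta> > 0\<close> R(1) by auto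
    have "2 * mu * R \<le> \<eta>"
      using mu R(1) by (simp add: field_simps)
    then have "homothet C mu y \<subseteq> cball (mu *\<^sub>R c0 + y) \<eta>"
      using homothet_subset_cball[OF R(2) \<open>c0 \<in> C\<close>, of mu y] mu(1) subset_cball by fastforce
    then have "homothet C mu y - A \<subseteq> cball (mu *\<^sub>R c0 + y) \<eta> \<inter> - A"
      by blast
    then have "measure M (homothet C mu y - A) \<le> measure M (cball (mu *\<^sub>R c0 + y) \<eta> \<inter> - A)"
      using A by (intro finite_measure_mono) (auto intro: compl_in_sets closed_in_sets)
    with heavy have "t \<le> measure M (cball (mu *\<^sub>R c0 + y) \<eta> \<inter> - A)"
      by linarith
    then show ?thesis ..
  qed
  from atom_if_heavy_small_balls[OF compl_in_sets[OF A] \<open>t > 0\<close> this]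
  show ?thesis by auto
qed

text \<open>Either a heavy homothet of nearly minimal scale exists, and every heavy homothet meeting it
  has at least half its scale, so its grid hits it; or heavy homothets get arbitrarily small,
  and there is a heavy atom.\<close>

lemma heavy_homothet_step:
  assumes "compact C" "convex C" and frame: "coord_bounded_frame d u C"
    and A: "A \<in> sets M" and "t > 0"
    and heavy: "lam0 > 0" "measure M (homothet C lam0 x0 - A) \<ge> t"
  obtains X P where "X \<in> sets M" "measure M (X - A) \<ge> t" "finite P" "card P \<le> grid_size d"
    "\<And>mu y. mu > 0 \<Longrightarrow> measure M (homothet C mu y - A) \<ge> t \<Longrightarrow> homothet C mu y \<inter> X \<noteq> {}
       \<Longrightarrow> P \<inter> homothet C mu y \<noteq> {}"
proof -
  define \<Lambda> where "\<Lambda> = {mu. mu > 0 \<and> (\<exists>y. measure M (homothet C mu y - A) \<ge> t)}"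
  have "lam0 \<in> \<Lambda>" and bdd: "bdd_below \<Lambda>"
    using heavy unfolding \<Lambda>_def by (auto intro: bdd_belowI[of _ 0])
  then have "\<Lambda> \<noteq> {}" by blast
  have "Inf \<Lambda> \<ge> 0"
    using \<open>\<Lambda> \<noteq> {}\<close> by (intro cInf_greatest) (auto simp: \<Lambda>_def)
  then consider (positive) "Inf \<Lambda> > 0" | (zero) "Inf \<Lambda> = 0"
    by fastforce
  then show thesis
  proof cases
    case positive
    then obtain lam where "lam \<in> \<Lambda>" "lam < 2 * Inf \<Lambda>"
      using cInf_lessD[OF \<open>\<Lambda> \<noteq> {}\<close>, of "2 * Inf \<Lambda>"] by auto
    then obtain x where "lam > 0" and heavy_x: "measure M (homothet C lam x - A) \<ge> t"
      unfolding \<Lambda>_def by blast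
    show thesis
    proof (rule that[of "homothet C lam x" "frame_grid d u x lam"])
      show "homothet C lam x \<in> sets M"
        by (intro closed_in_sets compact_imp_closed compact_homothet \<open>compact C\<close>)
      fix mu y
      assume "mu > 0" "measure M (homothet C mu y - A) \<ge> t" and meet: "homothet C mu y \<inter> homothet C lam x \<noteq> {}"
      then have "mu \<in> \<Lambda>"
        unfolding \<Lambda>_def by blast
      then have "lam / 2 \<le> mu"
        using cInf_lower[OF _ bdd, of mu] \<open>lam < 2 * Inf \<Lambda>\<close> by simp
      then show "frame_grid d u x lam \<inter> homothet C mu y \<noteq> {}"
        using frame_grid_meets_homothet[OF \<open>convex C\<close> frame \<open>lam > 0\<close> _ meet] by blast
    qed (use heavy_x finite_frame_grid card_frame_grid_le in auto)
  next
    case zero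
    have "\<exists>mu y. 0 < mu \<and> mu < \<eta> \<and> measure M (homothet C mu y - A) \<ge> t" if "\<eta> > 0" for \<eta>
      using cInf_lessD[OF \<open>\<Lambda> \<noteq> {}\<close>, of \<eta>] zero that unfolding \<Lambda>_def by auto
    moreover have "C \<noteq> {}"
      using frame by (auto simp: coord_bounded_frame_def)
    ultimately obtain p where "p \<notin> A" "measure M {p} \<ge> t"
      using atom_if_heavy_small_homothets[OF \<open>compact C\<close> _ A \<open>t > 0\<close>] by blast
    moreover have "{p} - A = {p}"
      using \<open>p \<notin> A\<close> by blast
    ultimately show thesis
      using grid_size_pos[of d]
      by (intro that[of "{p}" "{p}"]) (auto intro: closed_in_sets)
  qed
qed

lemma greedy_net:
  assumes "compact C" "convex C" "coord_bounded_frame d u C" and "t > 0"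
  shows "A \<in> sets M \<Longrightarrow> measure M (- A) < (real k + 1) * t \<Longrightarrow>
    \<exists>W. finite W \<and> card W \<le> grid_size d * k \<and>
      (\<forall>mu y. mu > 0 \<longrightarrow> measure M (homothet C mu y - A) \<ge> t \<longrightarrow> W \<inter> homothet C mu y \<noteq> {})"
proof (induction k arbitrary: A)
  case 0
  have "measure M (homothet C mu y - A) < t" for mu y
    using finite_measure_mono[of "homothet C mu y - A" "- A"] compl_in_sets[OF 0(1)] 0(2)
    by (simp add: Diff_eq)
  then show ?case
    by (intro exI[of _ "{}"]) (auto simp: not_le)
next
  case (Suc k)
  show ?case
  proof (cases "\<exists>mu y. mu > 0 \<and> measure M (homothet C mu y - A) \<ge> t")
    case False
    then show ?thesis
      by (intro exI[of _ "{}"]) auto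
  next
    case True
    then obtain lam0 x0 where "lam0 > 0" "measure M (homothet C lam0 x0 - A) \<ge> t"
      by blast
    then obtain X P where X: "X \<in> sets M" "measure M (X - A) \<ge> t"
      and P: "finite P" "card P \<le> grid_size d"
      and hit: "\<And>mu y. mu > 0 \<Longrightarrow> measure M (homothet C mu y - A) \<ge> t \<Longrightarrow>
                  homothet C mu y \<inter> X \<noteq> {} \<Longrightarrow> P \<inter> homothet C mu y \<noteq> {}"
      using heavy_homothet_step[OF assms(1-3) Suc.prems(1) \<open>t > 0\<close>] by metis
    have "measure M (- (A \<union> X)) < (real k + 1) * t"
      using measure_compl_Un[OF Suc.prems(1) X(1)] Suc.prems(2) X(2) by (simp add: algebra_simps)
    then obtain W where W: "finite W" "card W \<le> grid_size d * k"
      and hitW: "\<forall>mu y. mu > 0 \<longrightarrow> measure M (homothet C mu y - (A \<union> X)) \<ge> t \<longrightarrow> W \<inter> homothet C mu y \<noteq> {}"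
      using Suc.IH[OF sets.Un[OF Suc.prems(1) X(1)]] by blast
    have "card (W \<union> P) \<le> grid_size d * Suc k"
      using card_Un_le[of W P] W P by simp
    moreover have "(W \<union> P) \<inter> homothet C mu y \<noteq> {}"
      if "mu > 0" "measure M (homothet C mu y - A) \<ge> t" for mu y
    proof (cases "homothet C mu y \<inter> X = {}")
      case True
      then have "homothet C mu y - (A \<union> X) = homothet C mu y - A"
        by blast
      then have "measure M (homothet C mu y - (A \<union> X)) \<ge> t"
        using that(2) by simp
      then show ?thesis
        using hitW that(1) by blast
    qed (use hit[OF that] in blast)
    ultimately show ?thesis
      using W(1) P(1) by blast
  qed
qed

lemma weak_eps_net_homothets:
  assumes "compact C" "convex C" "coord_bounded_frame d u C"
    and "\<epsilon> > 0" "measure M UNIV > 0"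
  obtains W where "finite W" "real (card W) \<le> grid_size d / \<epsilon>"
    "\<And>mu y. mu > 0 \<Longrightarrow> measure M (homothet C mu y) \<ge> \<epsilon> * measure M UNIV \<Longrightarrow> W \<inter> homothet C mu y \<noteq> {}"
proof -
  define k where "k = nat \<lfloor>1 / \<epsilon>\<rfloor>"
  have "real k = of_int \<lfloor>1 / \<epsilon>\<rfloor>"
    using \<open>\<epsilon> > 0\<close> unfolding k_def by simp
  then have k: "real k \<le> 1 / \<epsilon>" "1 / \<epsilon> < real k + 1"
    using of_int_floor_le[of "1 / \<epsilon>"] real_of_int_floor_add_one_gt[of "1 / \<epsilon>"] by linarith+
  have "1 < (real k + 1) * \<epsilon>"
    using k(2) \<open>\<epsilon> > 0\<close> by (simp add: field_simps)
  then have "measure M UNIV * 1 < measure M UNIV * ((real k + 1) * \<epsilon>)"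
    using assms(5) by (rule mult_strict_left_mono)
  then have "measure M (- {}) < (real k + 1) * (\<epsilon> * measure M UNIV)"
    by (simp add: algebra_simps)
  moreover have "\<epsilon> * measure M UNIV > 0"
    using assms(4,5) by simp
  ultimately obtain W where W: "finite W" "card W \<le> grid_size d * k"
    "\<forall>mu y. mu > 0 \<longrightarrow> measure M (homothet C mu y - {}) \<ge> \<epsilon> * measure M UNIV \<longrightarrow> W \<inter> homothet C mu y \<noteq> {}"
    using greedy_net[OF assms(1-3), of "\<epsilon> * measure M UNIV" "{}" k] by blast
  have "real (card W) \<le> real (grid_size d) * real k"
    using W(2) by (metis of_nat_le_iff of_nat_mult)
  also have "\<dots> \<le> grid_size d / \<epsilon>"
    using k(1) mult_left_mono[OF k(1), of "real (grid_size d)"] by simp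
  finally show thesis
    using W by (intro that) auto
qed

lemma convex_body_weak_eps_net:
  assumes "convex_body C" and "\<epsilon> > 0" "measure M UNIV > 0"
  obtains W where "finite W" "real (card W) \<le> grid_size DIM('a) / \<epsilon>"
    "\<And>C'. C' \<in> homothets C \<Longrightarrow> measure M C' \<ge> \<epsilon> * measure M UNIV \<Longrightarrow> W \<inter> C' \<noteq> {}"
proof -
  have "compact C" "convex C" "bounded C" "interior C \<noteq> {}"
    using assms(1) compact_imp_bounded by (auto simp: convex_body_def)
  then obtain u where "coord_bounded_frame DIM('a) u C"
    using coord_bounded_frame_exists by blast
  then obtain W where "finite W" "real (card W) \<le> grid_size DIM('a) / \<epsilon>"
    "\<And>mu y. mu > 0 \<Longrightarrow> measure M (homothet C mu y) \<ge> \<epsilon> * measure M UNIV \<Longrightarrow> W \<inter> homothet C mu y \<noteq> {}"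
    using weak_eps_net_homothets[OF \<open>compact C\<close> \<open>convex C\<close> _ assms(2,3)] by blast
  then show thesis
    by (intro that) (auto simp: homothets_eq)
qed

end

section \<open>Finite point sets and nice measures\<close>

definition counting_measure_on :: "'a set \<Rightarrow> 'a measure" where
  "counting_measure_on S = density (count_space UNIV) (indicator S)"

lemma measure_counting_measure_on:
  assumes "finite S"
  shows "measure (counting_measure_on S) A = real (card (A \<inter> S))"
proof -
  have "emeasure (counting_measure_on S) A = of_nat (card (S \<inter> A))"
    unfolding counting_measure_on_def using assms
    by (simp add: emeasure_restricted emeasure_count_space_finite)
  then show ?thesis
    by (simp add: measure_def Int_commute)
qed

lemma counting_measure_on_bounded_support:
  assumes "finite S" "S \<subseteq> cball z r"
  shows "finite_measure_bounded_support (counting_measure_on S) z r"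
proof (intro finite_measure_bounded_support.intro finite_measure_bounded_support_axioms.intro)
  show "finite_measure (counting_measure_on S)"
    using assms(1) unfolding counting_measure_on_def
    by (intro finite_measureI) (simp add: emeasure_restricted emeasure_count_space_finite)
  show "sets borel \<subseteq> sets (counting_measure_on S)"
    by (simp add: counting_measure_on_def)
  show "measure (counting_measure_on S) (- cball z r) = 0"
  proof -
    have "- cball z r \<inter> S = {}"
      using assms(2) by blast
    then show ?thesis
      by (simp add: measure_counting_measure_on[OF assms(1)])
  qed
qed

lemma finite_set_weak_eps_net:
  fixes S :: "'a::euclidean_space set"
  assumes "convex_body C" and S: "finite S" "S \<noteq> {}" and "\<epsilon> > 0"
  obtains W where "finite W" "real (card W) \<le> grid_size DIM('a) / \<epsilon>"
    "\<And>C'. C' \<in> homothets C \<Longrightarrow> real (card (C' \<inter> S)) \<ge> \<epsilon> * real (card S) \<Longrightarrow> W \<inter> C' \<noteq> {}"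
proof -
  obtain z r where "S \<subseteq> cball z r"
    using finite_imp_bounded[OF S(1)] unfolding bounded_subset_cball by blast
  then interpret finite_measure_bounded_support "counting_measure_on S" z r
    using S(1) by (rule counting_measure_on_bounded_support[rotated])
  have pos: "measure (counting_measure_on S) UNIV > 0"
    using S by (simp add: measure_counting_measure_on card_gt_0_iff)
  obtain W where W: "finite W" "real (card W) \<le> grid_size DIM('a) / \<epsilon>"
    "\<And>C'. C' \<in> homothets C \<Longrightarrow>
       measure (counting_measure_on S) C' \<ge> \<epsilon> * measure (counting_measure_on S) UNIV \<Longrightarrow> W \<inter> C' \<noteq> {}"
    using convex_body_weak_eps_net[OF assms(1,4) pos] by blast
  show thesis
  proof (rule that[OF W(1,2)])
    fix C' assume "C' \<in> homothets C" "real (card (C' \<inter> S)) \<ge> \<epsilon> * real (card S)"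
    then show "W \<inter> C' \<noteq> {}"
      using W(3) by (simp add: measure_counting_measure_on[OF S(1)])
  qed
qed

lemma nice_measure_weak_eps_net:
  fixes M :: "'a::euclidean_space measure"
  assumes "convex_body C" "nice_measure C M" "emeasure M (space M) > 0" "\<epsilon> > 0"
  obtains W where "finite W" "real (card W) \<le> grid_size DIM('a) / \<epsilon>"
    "\<And>C'. C' \<in> homothets C \<Longrightarrow> emeasure M C' \<ge> ennreal \<epsilon> * emeasure M (space M) \<Longrightarrow> W \<inter> C' \<noteq> {}"
proof -
  have sets: "sets M = sets borel" and finite: "emeasure M (space M) < \<infinity>"
    using assms(2) by (auto simp: nice_measure_def locally_finite_borel_def)
  then interpret finite_measure M
    by (intro finite_measureI) simp
  from assms(2) obtain z r where "emeasure M (cball z r) = emeasure M (space M)"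
    by (auto simp: nice_measure_def)
  then have "measure M (cball z r) = measure M (space M)"
    by (simp add: measure_def)
  moreover have "measure M (space M - cball z r) = measure M (space M) - measure M (cball z r)"
    using sets by (intro finite_measure_compl) simp
  ultimately have "measure M (space M - cball z r) = 0"
    by simp
  then interpret finite_measure_bounded_support M z r
    using sets by unfold_locales (simp_all add: Compl_eq_Diff_UNIV sets_eq_imp_space_eq[OF sets])
  have pos: "measure M UNIV > 0"
    using assms(3) by (simp add: emeasure_eq_measure space_eq_UNIV)
  obtain W where W: "finite W" "real (card W) \<le> grid_size DIM('a) / \<epsilon>"
    "\<And>C'. C' \<in> homothets C \<Longrightarrow> measure M C' \<ge> \<epsilon> * measure M UNIV \<Longrightarrow> W \<inter> C' \<noteq> {}"
    using convex_body_weak_eps_net[OF assms(1,4) pos] by blast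
  show thesis
  proof (rule that[OF W(1,2)])
    fix C' assume C': "C' \<in> homothets C" "emeasure M C' \<ge> ennreal \<epsilon> * emeasure M (space M)"
    then have "ennreal (\<epsilon> * measure M UNIV) \<le> ennreal (measure M C')"
      using assms(4) by (simp add: emeasure_eq_measure space_eq_UNIV ennreal_mult)
    then have "\<epsilon> * measure M UNIV \<le> measure M C'"
      by (simp add: ennreal_le_iff)
    then show "W \<inter> C' \<noteq> {}"
      using W(3) C'(1) by blast
  qed
qed

theorem mainTheorem1:
  "\<exists>c::real. c > 0 \<and>
    (\<forall>C :: 'a::euclidean_space set. convex_body C \<longrightarrow>
      (\<forall>S :: 'a set. \<forall>\<epsilon>::real. finite S \<and> S \<noteq> {} \<and> \<epsilon> > 0 \<longrightarrow>
         (\<exists>W. finite W \<and> real (card W) \<le> c / \<epsilon> \<and>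
            (\<forall>C' \<in> homothets C. real (card (C' \<inter> S)) \<ge> \<epsilon> * real (card S) \<longrightarrow> W \<inter> C' \<noteq> {})))
    \<and> (\<forall>M :: 'a measure. \<forall>\<epsilon>::real. nice_measure C M \<and> emeasure M (space M) > 0 \<and> \<epsilon> > 0 \<longrightarrow>
         (\<exists>W. finite W \<and> real (card W) \<le> c / \<epsilon> \<and>
            (\<forall>C' \<in> homothets C. emeasure M C' \<ge> ennreal \<epsilon> * emeasure M (space M) \<longrightarrow> W \<inter> C' \<noteq> {}))))"
proof (intro exI[of _ "real (grid_size DIM('a))"] conjI allI impI; (elim conjE)?)
  show "real (grid_size DIM('a)) > 0"
    using grid_size_pos by simp
  fix C :: "'a set" assume C: "convex_body C"
  show "\<exists>W. finite W \<and> real (card W) \<le> real (grid_size DIM('a)) / \<epsilon> \<and>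
          (\<forall>C' \<in> homothets C. real (card (C' \<inter> S)) \<ge> \<epsilon> * real (card S) \<longrightarrow> W \<inter> C' \<noteq> {})"
    if "finite S" "S \<noteq> {}" "\<epsilon> > 0" for S and \<epsilon> :: real
    by (rule finite_set_weak_eps_net[OF C that]) blast
  show "\<exists>W. finite W \<and> real (card W) \<le> real (grid_size DIM('a)) / \<epsilon> \<and>
          (\<forall>C' \<in> homothets C. emeasure M C' \<ge> ennreal \<epsilon> * emeasure M (space M) \<longrightarrow> W \<inter> C' \<noteq> {})"
    if "nice_measure C M" "emeasure M (space M) > 0" "\<epsilon> > 0" for M and \<epsilon> :: real
    by (rule nice_measure_weak_eps_net[OF C that]) blast
qed

end
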